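(* Let $V$ be a real vector space with basis $e^1,\dots,e^k$ and a nondegenerate symmetric bilinear form $q_1$ with Gram matrix $G=(G^{ab})$, $G^{ab}=q_1(e^a,e^b)$. For real $k\times k$ matrices $X,Y$ put $[X,Y]_G:=XGY-YGX$ and $\{X,Y\}_G:=XGY+YGX$. Let $X:\lambda\to\mathbb{R}^{k\times k}$ be a map taking values in symmetric matrices such that for all $\alpha,\beta\in\lambda$: $[X(\alpha),X(\beta)]_G=0$ if $(\alpha|\beta)=0$, and $\{X(\alpha),X(\beta)\}_G=\frac12 X(\alpha\pm\beta)$ if $(\alpha|\beta)=\mp1$ and $\alpha\pm\beta\in\lambda$. Let $\mathcal{S}$ be the Clifford algebra of $V\otimes S$ defined below, with elements $\phi^a_\gamma=e^a\otimes f_\gamma$, and put $$\widehat{J}(\alpha_i):=\sum_{a,b=1}^k\sum_{\gamma,\delta=1}^l X(\alpha_i)_{ab}\,\Gamma(\alpha_i)_{\gamma\delta}\,\phi^a_\gamma\phi^b_\delta\in\mathcal S.$$ Then the assignment $X_i\mapsto\widehat J(\alpha_i)$ extends to a Lie algebra homomorphism from $\mathfrak k$ into $\mathcal S$ (with bracket the commutator $uv-vu$), and hence defines a finite-dimensional representation $\sigma$ of $\mathfrak k$ with $\sigma(X_i)=\widehat J(\alpha_i)$.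
   Context: Let $A=(a_{ij})_{1\le i,j\le n}$ be a symmetrizable simply laced generalized Cartan matrix (off-diagonal entries $0$ or $-1$); the Dynkin diagram has an edge between $i\ne j$ iff $a_{ij}=-1$. Let $\mathfrak g$ be the split real Kac–Moody algebra of $A$ with Chevalley generators $e_i,f_i$, Cartan subalgebra $\mathfrak h$ (from a real realization), simple roots $\alpha_1,\dots,\alpha_n\in\mathfrak h^*$, and let $(\cdot|\cdot)$ be the nondegenerate invariant symmetric bilinear form induced on $\mathfrak h^*$, with $(\alpha_i|\alpha_j)=a_{ij}$. Let $\mathfrak k$ be the fixed-point subalgebra of the Chevalley involution ($e_i\mapsto -f_i$, $f_i\mapsto-e_i$, $h\mapsto -h$), with Berman generators $X_i=e_i-f_i$; $\mathfrak k$ is presented by generators $X_1,\dots,X_n$ and relations $[X_i,[X_i,X_j]]=-X_j$ if $a_{ij}=-1$, $[X_i,X_j]=0$ if $a_{ij}=0$. Let $\lambda$ be the set of real roots consisting of the simple roots $\alpha_1,\dots,\alpha_n$ together with all $\alpha_i+\alpha_j$ for $i,j$ forming an edge of the Dynkin diagram. A generalized spin representation is a representation $\rho$ of $\mathfrak k$ with $\rho(X_i)^2=-\frac14\mathrm{id}$ for all $i$. Fix a finite-dimensional real vector space $S$ with positive definite inner product $q_2$ and orthonormal basis $f_1,\dots,f_l$, and a generalized spin representation $\rho:\mathfrak k\to\mathrm{End}(S)$ whose values $\rho(X_i)$ are anti-symmetric real matrices with respect to this basis (such exist, e.g. by realifying the generalized spin representations with compact image constructed by Hainke–Köhl–Levy);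 put $\Gamma(\alpha_i):=2\rho(X_i)$, an anti-symmetric real $l\times l$ matrix with entries $\Gamma(\alpha_i)_{\gamma\delta}$. Let $q=q_1\otimes q_2$ be the symmetric bilinear form on $V\otimes S$ with $q(e^a\otimes f_\gamma,e^b\otimes f_\delta)=G^{ab}\delta_{\gamma\delta}$, and let $\mathcal S$ be the Clifford algebra: the tensor algebra of $V\otimes S$ modulo the ideal generated by $w\otimes w-\frac12 q(w,w)\cdot 1$, so that $vw+wv=q(v,w)$ in $\mathcal S$. *)

theory Defs
  imports "HOL-Analysis.Analysis"
begin

text \<open>Root lattice elements are written as integer coefficient vectors with respect
  to the simple roots (indexed by the finite type 'n).\<close>

definition simple_root :: "'n \<Rightarrow> ('n \<Rightarrow> int)" where
  "simple_root i = (\<lambda>j. if j = i then 1 else 0)"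

definition root_form :: "('n::finite \<Rightarrow> 'n \<Rightarrow> int) \<Rightarrow> ('n \<Rightarrow> int) \<Rightarrow> ('n \<Rightarrow> int) \<Rightarrow> int" where
  "root_form A c d = (\<Sum>i\<in>UNIV. \<Sum>j\<in>UNIV. c i * d j * A i j)"

definition simply_laced_GCM :: "('n \<Rightarrow> 'n \<Rightarrow> int) \<Rightarrow> bool" where
  "simply_laced_GCM A \<longleftrightarrow> (\<forall>i. A i i = 2) \<and> (\<forall>i j. i \<noteq> j \<longrightarrow> A i j = 0 \<or> A i j = -1)
     \<and> (\<forall>i j. A i j = A j i)"

definition lambda_roots :: "('n \<Rightarrow> 'n \<Rightarrow> int) \<Rightarrow> ('n \<Rightarrow> int) set" where
  "lambda_roots A = range simple_root \<union>
     {(\<lambda>m. simple_root i m + simple_root j m) | i j. i \<noteq> j \<and> A i j = -1}"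

text \<open>The defining relations of the Berman presentation of k, for images g i of the
  generators X_i in a structure with bracket br. A map from the generators extends to a
  Lie algebra homomorphism out of k (which is presented by these relations) exactly
  when these relations hold.\<close>
definition berman_relations ::
  "('n \<Rightarrow> 'n \<Rightarrow> int) \<Rightarrow> ('a \<Rightarrow> 'a \<Rightarrow> 'a::ab_group_add) \<Rightarrow> ('n \<Rightarrow> 'a) \<Rightarrow> bool" where
  "berman_relations A br g \<longleftrightarrow>
     (\<forall>i j. i \<noteq> j \<longrightarrow>
        (A i j = -1 \<longrightarrow> br (g i) (br (g i) (g j)) = - g j) \<and>
        (A i j = 0 \<longrightarrow> br (g i) (g j) = 0))"

definition mat_comm :: "real^'m^'m \<Rightarrow> real^'m^'m \<Rightarrow> real^'m^'m" where
  "mat_comm P Q = P ** Q - Q ** P"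

definition ring_comm :: "'a::ring \<Rightarrow> 'a \<Rightarrow> 'a" where
  "ring_comm u v = u * v - v * u"

definition G_bracket :: "real^'k^'k \<Rightarrow> real^'k^'k \<Rightarrow> real^'k^'k \<Rightarrow> real^'k^'k" where
  "G_bracket G P Q = P ** G ** Q - Q ** G ** P"

definition G_anticomm :: "real^'k^'k \<Rightarrow> real^'k^'k \<Rightarrow> real^'k^'k \<Rightarrow> real^'k^'k" where
  "G_anticomm G P Q = P ** G ** Q + Q ** G ** P"

text \<open>Generalized spin representation given by the images R i of the X_i, with
  antisymmetric matrices with respect to the orthonormal basis of S.\<close>
definition gen_spin_rep :: "('n \<Rightarrow> 'n \<Rightarrow> int) \<Rightarrow> ('n \<Rightarrow> real^'l^'l) \<Rightarrow> bool" where
  "gen_spin_rep A R \<longleftrightarrow> berman_relations A mat_comm R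
     \<and> (\<forall>i. R i ** R i = (- 1/4) *\<^sub>R mat 1)
     \<and> (\<forall>i. transpose (R i) = - R i)"

text \<open>The Clifford relations phi^a_gamma phi^b_delta + phi^b_delta phi^a_gamma
  = q(e^a (x) f_gamma, e^b (x) f_delta) = G^{ab} delta_{gamma delta}.\<close>
definition clifford_gens :: "real^'k^'k \<Rightarrow> ('k \<Rightarrow> 'l \<Rightarrow> 'c::real_algebra_1) \<Rightarrow> bool" where
  "clifford_gens G \<phi> \<longleftrightarrow> (\<forall>a b \<gamma> \<delta>.
     \<phi> a \<gamma> * \<phi> b \<delta> + \<phi> b \<delta> * \<phi> a \<gamma> = of_real (G $ a $ b * (if \<gamma> = \<delta> then 1 else 0)))"

definition J_hat :: "('n \<Rightarrow> int) \<Rightarrow> (('n \<Rightarrow> int) \<Rightarrow> real^'k^'k) \<Rightarrow> real^'l^'l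
     \<Rightarrow> ('k::finite \<Rightarrow> 'l::finite \<Rightarrow> 'c::real_algebra_1) \<Rightarrow> 'c" where
  "J_hat \<alpha> X Gam \<phi> = (\<Sum>a\<in>UNIV. \<Sum>b\<in>UNIV. \<Sum>\<gamma>\<in>UNIV. \<Sum>\<delta>\<in>UNIV.
      (X \<alpha> $ a $ b * Gam $ \<gamma> $ \<delta>) *\<^sub>R (\<phi> a \<gamma> * \<phi> b \<delta>))"

end

theory Submission
  imports Defs
begin

(* Let psi_u be Clifford generators, psi_u psi_v + psi_v psi_u = g_uv, and Q(M) = sum M_uv psi_u psi_v.
   For antisymmetric M the commutator with Q(M) is a derivation sending psi_w to
   2 sum_u (M g)_uw psi_u, hence [Q(M), Q(N)] = 2 Q(M g N - N g M).  Indexing the generators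
   phi^a_gamma by pairs (a, gamma) gives g = G (x) 1 and J_i = Q(X(alpha_i) (x) Gamma_i), so
   [J_i, J_j] = 2 Q(X_i G X_j (x) Gamma_i Gamma_j - X_j G X_i (x) Gamma_j Gamma_i).  By Gamma_i^2 = -1
   and the spin relations, Gamma_i and Gamma_j commute for non-adjacent and anticommute for adjacent
   nodes, so [J_i, J_j] is 2 Q([X_i, X_j]_G (x) Gamma_i Gamma_j) = 0, respectively
   2 Q({X_i, X_j}_G (x) Gamma_i Gamma_j) = Q(X(alpha_i + alpha_j) (x) Gamma_i Gamma_j).  Bracketing once
   more with J_i, {X_i, X(alpha_i + alpha_j)}_G = X_j / 2 and Gamma_i Gamma_i Gamma_j = -Gamma_j give -J_j. *)

lemma matrix_diff_ldistrib: "(A::'a::ring_1^'n^'m) ** (B - C) = A ** B - A ** C"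
  by (simp add: matrix_matrix_mult_def vec_eq_iff sum_subtractf right_diff_distrib)

lemma matrix_diff_rdistrib: "((A::'a::ring_1^'n^'m) - B) ** C = A ** C - B ** C"
  by (simp add: matrix_matrix_mult_def vec_eq_iff sum_subtractf left_diff_distrib)

lemma matrix_uminus_left: "(- (A::'a::ring_1^'n^'m)) ** B = - (A ** B)"
  by (simp add: matrix_matrix_mult_def vec_eq_iff sum_negf)

lemma matrix_uminus_right: "(A::'a::ring_1^'n^'m) ** (- B) = - (A ** B)"
  by (simp add: matrix_matrix_mult_def vec_eq_iff sum_negf)

lemma anticommute_if_double_commutator:
  fixes r s :: "real^'n^'n"
  assumes rr: "r ** r = (- 1/4) *\<^sub>R mat 1"
    and rrs: "mat_comm r (mat_comm r s) = - s"
  shows "s ** r = - (r ** s)"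
proof -
  have rrs_left: "r ** r ** s = (- 1/4) *\<^sub>R s"
    by (simp add: rr matrix_uminus_left flip: scalar_matrix_assoc)
  have srr_right: "s ** r ** r = (- 1/4) *\<^sub>R s"
    by (simp add: rr matrix_uminus_right matrix_scalar_ac flip: matrix_mul_assoc)
  have "- s = r ** r ** s - 2 *\<^sub>R (r ** s ** r) + s ** r ** r"
    using rrs unfolding mat_comm_def
    by (simp add: matrix_diff_ldistrib matrix_diff_rdistrib matrix_mul_assoc scaleR_2 algebra_simps)
  \<comment> \<open>entrywise, since \<open>*\<close> on \<open>real^'n^'n\<close> is the entrywise product\<close>
  then have entry:
    "(- s) $ i $ j = ((- 1/4) *\<^sub>R s - 2 *\<^sub>R (r ** s ** r) + (- 1/4) *\<^sub>R s) $ i $ j" for i j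
    unfolding rrs_left srr_right by (rule arg_cong)
  have "(r ** s ** r) $ i $ j = (1/4) * s $ i $ j" for i j
    using entry[of i j] by simp
  then have rsr: "r ** s ** r = (1/4) *\<^sub>R s"
    by (simp add: vec_eq_iff)
  have "(1/4) *\<^sub>R (s ** r) = - (r ** (r ** s ** r))"
    by (simp add: matrix_mul_assoc rr matrix_uminus_left flip: scalar_matrix_assoc)
  also have "\<dots> = (1/4) *\<^sub>R (- (r ** s))"
    by (simp add: rsr matrix_scalar_ac flip: scalar_matrix_assoc)
  finally show ?thesis
    by (simp only: scaleR_cancel_left) simp
qed

lemma gen_spin_rep_doubled:
  assumes "gen_spin_rep A R"
  shows gen_spin_rep_doubled_antisym: "transpose (2 *\<^sub>R R i) = - (2 *\<^sub>R R i)"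
    and gen_spin_rep_doubled_square: "(2 *\<^sub>R R i) ** (2 *\<^sub>R R i) = - mat 1"
    and gen_spin_rep_doubled_commute:
      "i \<noteq> j \<Longrightarrow> A i j = 0 \<Longrightarrow> (2 *\<^sub>R R j) ** (2 *\<^sub>R R i) = (2 *\<^sub>R R i) ** (2 *\<^sub>R R j)"
    and gen_spin_rep_doubled_anticommute:
      "i \<noteq> j \<Longrightarrow> A i j = -1 \<Longrightarrow> (2 *\<^sub>R R j) ** (2 *\<^sub>R R i) = - ((2 *\<^sub>R R i) ** (2 *\<^sub>R R j))"
proof -
  have berman: "berman_relations A mat_comm R" and square: "R i ** R i = (- 1/4) *\<^sub>R mat 1"
    and antisym: "transpose (R i) = - R i" for i
    using assms unfolding gen_spin_rep_def by auto
  have scale: "(2 *\<^sub>R P) ** (2 *\<^sub>R Q) = 4 *\<^sub>R (P ** Q)" for P Q :: "real^'l^'l"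
    by (simp add: matrix_scalar_ac flip: scalar_matrix_assoc)
  show "transpose (2 *\<^sub>R R i) = - (2 *\<^sub>R R i)"
    by (simp add: transpose_scalar antisym)
  show "(2 *\<^sub>R R i) ** (2 *\<^sub>R R i) = - mat 1"
    by (simp add: scale square)
  show "(2 *\<^sub>R R j) ** (2 *\<^sub>R R i) = (2 *\<^sub>R R i) ** (2 *\<^sub>R R j)" if "i \<noteq> j" "A i j = 0"
  proof -
    have "mat_comm (R i) (R j) = 0"
      using berman that by (simp add: berman_relations_def)
    then show ?thesis
      by (simp add: scale mat_comm_def)
  qed
  show "(2 *\<^sub>R R j) ** (2 *\<^sub>R R i) = - ((2 *\<^sub>R R i) ** (2 *\<^sub>R R j))" if "i \<noteq> j" "A i j = -1"
  proof -
    have "mat_comm (R i) (mat_comm (R i) (R j)) = - R j"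
      using berman that by (simp add: berman_relations_def)
    then show ?thesis
      by (simp add: scale anticommute_if_double_commutator[OF square])
  qed
qed

definition clifford_relations :: "real^'u^'u \<Rightarrow> ('u \<Rightarrow> 'c::real_algebra_1) \<Rightarrow> bool" where
  "clifford_relations g \<psi> \<longleftrightarrow> (\<forall>u v. \<psi> u * \<psi> v + \<psi> v * \<psi> u = of_real (g $ u $ v))"

definition clifford_quadratic :: "('u::finite \<Rightarrow> 'c::real_algebra_1) \<Rightarrow> real^'u^'u \<Rightarrow> 'c" where
  "clifford_quadratic \<psi> M = (\<Sum>u\<in>UNIV. \<Sum>v\<in>UNIV. M $ u $ v *\<^sub>R (\<psi> u * \<psi> v))"

lemma ring_comm_mult_right: "ring_comm a (b * c) = ring_comm a b * c + b * ring_comm a c"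
  unfolding ring_comm_def by (simp add: algebra_simps)

lemma ring_comm_clifford_generator_pair:
  assumes "clifford_relations g \<psi>"
  shows "ring_comm (\<psi> u * \<psi> v) (\<psi> w) = g $ v $ w *\<^sub>R \<psi> u - g $ u $ w *\<^sub>R \<psi> v"
proof -
  have swap: "\<psi> p * \<psi> q = of_real (g $ p $ q) - \<psi> q * \<psi> p" for p q
    using assms unfolding clifford_relations_def by (simp add: eq_diff_eq)
  have "\<psi> u * \<psi> v * \<psi> w = g $ v $ w *\<^sub>R \<psi> u - \<psi> u * \<psi> w * \<psi> v"
  proof -
    have "\<psi> u * \<psi> v * \<psi> w = \<psi> u * (of_real (g $ v $ w) - \<psi> w * \<psi> v)"
      by (simp add: mult.assoc flip: swap)
    then show ?thesis
      by (simp add: right_diff_distrib mult.assoc of_real_def)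
  qed
  moreover have "\<psi> w * \<psi> u * \<psi> v = g $ u $ w *\<^sub>R \<psi> v - \<psi> u * \<psi> w * \<psi> v"
  proof -
    have "\<psi> w * \<psi> u = of_real (g $ u $ w) - \<psi> u * \<psi> w"
      using swap[of u w] by (simp add: algebra_simps)
    then show ?thesis
      by (simp add: left_diff_distrib of_real_def)
  qed
  ultimately show ?thesis
    unfolding ring_comm_def by (simp add: mult.assoc)
qed

lemma ring_comm_clifford_quadratic_left:
  "ring_comm (clifford_quadratic \<psi> M) y
   = (\<Sum>u\<in>UNIV. \<Sum>v\<in>UNIV. M $ u $ v *\<^sub>R ring_comm (\<psi> u * \<psi> v) y)"
  unfolding ring_comm_def clifford_quadratic_def
  by (simp add: sum_distrib_left sum_distrib_right sum_subtractf scaleR_right_diff_distrib)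

lemma ring_comm_clifford_quadratic_right:
  "ring_comm y (clifford_quadratic \<psi> N)
   = (\<Sum>w\<in>UNIV. \<Sum>x\<in>UNIV. N $ w $ x *\<^sub>R ring_comm y (\<psi> w * \<psi> x))"
  unfolding ring_comm_def clifford_quadratic_def
  by (simp add: sum_distrib_left sum_distrib_right sum_subtractf scaleR_right_diff_distrib)

lemma clifford_quadratic_mult_left:
  "(\<Sum>w\<in>UNIV. \<Sum>x\<in>UNIV. N $ w $ x *\<^sub>R ((\<Sum>u\<in>UNIV. L $ u $ w *\<^sub>R \<psi> u) * \<psi> x))
   = clifford_quadratic \<psi> (L ** N)"
proof -
  have "(\<Sum>w\<in>UNIV. \<Sum>x\<in>UNIV. N $ w $ x *\<^sub>R ((\<Sum>u\<in>UNIV. L $ u $ w *\<^sub>R \<psi> u) * \<psi> x))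
      = (\<Sum>w\<in>UNIV. \<Sum>u\<in>UNIV. \<Sum>x\<in>UNIV. (L $ u $ w * N $ w $ x) *\<^sub>R (\<psi> u * \<psi> x))"
    by (subst sum.swap) (simp add: sum_distrib_right scaleR_sum_right mult.commute)
  also have "\<dots> = (\<Sum>u\<in>UNIV. \<Sum>x\<in>UNIV. \<Sum>w\<in>UNIV. (L $ u $ w * N $ w $ x) *\<^sub>R (\<psi> u * \<psi> x))"
    by (subst sum.swap) (rule sum.cong[OF refl], rule sum.swap)
  also have "\<dots> = clifford_quadratic \<psi> (L ** N)"
    by (simp add: clifford_quadratic_def matrix_matrix_mult_def scaleR_sum_left)
  finally show ?thesis .
qed

lemma clifford_quadratic_mult_right:
  "(\<Sum>w\<in>UNIV. \<Sum>x\<in>UNIV. N $ w $ x *\<^sub>R (\<psi> w * (\<Sum>u\<in>UNIV. L $ u $ x *\<^sub>R \<psi> u)))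
   = clifford_quadratic \<psi> (N ** transpose L)"
proof -
  have "(\<Sum>w\<in>UNIV. \<Sum>x\<in>UNIV. N $ w $ x *\<^sub>R (\<psi> w * (\<Sum>u\<in>UNIV. L $ u $ x *\<^sub>R \<psi> u)))
      = (\<Sum>w\<in>UNIV. \<Sum>u\<in>UNIV. \<Sum>x\<in>UNIV. (N $ w $ x * L $ u $ x) *\<^sub>R (\<psi> w * \<psi> u))"
    by (rule sum.cong[OF refl], subst sum.swap) (simp add: sum_distrib_left scaleR_sum_right)
  also have "\<dots> = clifford_quadratic \<psi> (N ** transpose L)"
    by (simp add: clifford_quadratic_def matrix_matrix_mult_def transpose_def scaleR_sum_left)
  finally show ?thesis .
qed

lemma ring_comm_clifford_quadratic_generator:
  fixes \<psi> :: "'u::finite \<Rightarrow> 'c::real_algebra_1"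
  assumes cl: "clifford_relations g \<psi>" and M_anti: "transpose M = - M"
  shows "ring_comm (clifford_quadratic \<psi> M) (\<psi> w) = 2 *\<^sub>R (\<Sum>u\<in>UNIV. (M ** g) $ u $ w *\<^sub>R \<psi> u)"
proof -
  have "ring_comm (clifford_quadratic \<psi> M) (\<psi> w)
      = (\<Sum>u\<in>UNIV. \<Sum>v\<in>UNIV. M $ u $ v *\<^sub>R (g $ v $ w *\<^sub>R \<psi> u - g $ u $ w *\<^sub>R \<psi> v))"
    unfolding ring_comm_clifford_quadratic_left ring_comm_clifford_generator_pair[OF cl] ..
  also have "\<dots> = (\<Sum>u\<in>UNIV. \<Sum>v\<in>UNIV. (M $ u $ v * g $ v $ w) *\<^sub>R \<psi> u)
                 - (\<Sum>v\<in>UNIV. \<Sum>u\<in>UNIV. (M $ u $ v * g $ u $ w) *\<^sub>R \<psi> v)"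
    by (subst (2) sum.swap) (simp add: scaleR_right_diff_distrib sum_subtractf)
  also have "\<dots> = (\<Sum>u\<in>UNIV. (M ** g) $ u $ w *\<^sub>R \<psi> u) - (\<Sum>v\<in>UNIV. (transpose M ** g) $ v $ w *\<^sub>R \<psi> v)"
    by (simp add: matrix_matrix_mult_def transpose_def scaleR_sum_left)
  also have "\<dots> = 2 *\<^sub>R (\<Sum>u\<in>UNIV. (M ** g) $ u $ w *\<^sub>R \<psi> u)"
    by (simp add: M_anti matrix_uminus_left sum_negf scaleR_2)
  finally show ?thesis .
qed

lemma clifford_quadratic_diff:
  "clifford_quadratic \<psi> (M - N) = clifford_quadratic \<psi> M - clifford_quadratic \<psi> N"
  by (simp add: clifford_quadratic_def scaleR_left_diff_distrib sum_subtractf)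

lemma clifford_quadratic_uminus:
  "clifford_quadratic \<psi> (- M) = - clifford_quadratic \<psi> M"
  by (simp add: clifford_quadratic_def sum_negf)

lemma clifford_quadratic_scaleR:
  "clifford_quadratic \<psi> (c *\<^sub>R M) = c *\<^sub>R clifford_quadratic \<psi> M"
  by (simp add: clifford_quadratic_def scaleR_sum_right)

lemma ring_comm_clifford_quadratic:
  fixes \<psi> :: "'u::finite \<Rightarrow> 'c::real_algebra_1"
  assumes cl: "clifford_relations g \<psi>" and g_sym: "transpose g = g" and M_anti: "transpose M = - M"
  shows "ring_comm (clifford_quadratic \<psi> M) (clifford_quadratic \<psi> N)
       = 2 *\<^sub>R clifford_quadratic \<psi> (M ** g ** N - N ** g ** M)"
proof -
  let ?Q = "clifford_quadratic \<psi>" and ?L = "M ** g"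
  have "ring_comm (?Q M) (?Q N)
      = (\<Sum>w\<in>UNIV. \<Sum>x\<in>UNIV. N $ w $ x *\<^sub>R (ring_comm (?Q M) (\<psi> w) * \<psi> x + \<psi> w * ring_comm (?Q M) (\<psi> x)))"
    unfolding ring_comm_clifford_quadratic_right ring_comm_mult_right ..
  also have "\<dots> = 2 *\<^sub>R (\<Sum>w\<in>UNIV. \<Sum>x\<in>UNIV. N $ w $ x *\<^sub>R ((\<Sum>u\<in>UNIV. ?L $ u $ w *\<^sub>R \<psi> u) * \<psi> x))
                 + 2 *\<^sub>R (\<Sum>w\<in>UNIV. \<Sum>x\<in>UNIV. N $ w $ x *\<^sub>R (\<psi> w * (\<Sum>u\<in>UNIV. ?L $ u $ x *\<^sub>R \<psi> u)))"
    by (simp only: ring_comm_clifford_quadratic_generator[OF cl M_anti] mult_scaleR_left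
        mult_scaleR_right scaleR_right_distrib scaleR_left_commute[of _ 2] sum.distrib)
      (simp only: scaleR_sum_right)
  also have "\<dots> = 2 *\<^sub>R ?Q (?L ** N) + 2 *\<^sub>R ?Q (N ** transpose ?L)"
    unfolding clifford_quadratic_mult_left clifford_quadratic_mult_right ..
  also have "N ** transpose ?L = - (N ** g ** M)"
    by (simp add: matrix_transpose_mul g_sym M_anti matrix_uminus_left matrix_uminus_right matrix_mul_assoc)
  finally show ?thesis
    by (simp add: clifford_quadratic_diff clifford_quadratic_uminus scaleR_right_diff_distrib)
qed

definition kronecker_product :: "'a::times^'n^'m \<Rightarrow> 'a^'q^'p \<Rightarrow> 'a^('n \<times> 'q)^('m \<times> 'p)" where
  "kronecker_product A B = (\<chi> i j. A $ fst i $ fst j * B $ snd i $ snd j)"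

lemma sum_UNIV_prod:
  "(\<Sum>p\<in>UNIV. f p) = (\<Sum>a\<in>UNIV. \<Sum>b\<in>UNIV. f (a, b))"
  by (simp add: sum.cartesian_product flip: UNIV_Times_UNIV)

lemma kronecker_product_mult:
  fixes A :: "'a::comm_semiring_1^'n^'m" and B :: "'a^'q^'p"
  shows "kronecker_product A B ** kronecker_product C D = kronecker_product (A ** C) (B ** D)"
  by (simp add: kronecker_product_def matrix_matrix_mult_def vec_eq_iff sum_product sum_UNIV_prod ac_simps)

lemma transpose_kronecker_product:
  "transpose (kronecker_product A B) = kronecker_product (transpose A) (transpose B)"
  by (simp add: kronecker_product_def transpose_def)

lemma kronecker_product_add_left:
  "kronecker_product (A + B :: 'a::semiring^'n^'m) C = kronecker_product A C + kronecker_product B C"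
  by (simp add: kronecker_product_def vec_eq_iff distrib_right)

lemma kronecker_product_diff_left:
  "kronecker_product (A - B :: 'a::ring^'n^'m) C = kronecker_product A C - kronecker_product B C"
  by (simp add: kronecker_product_def vec_eq_iff left_diff_distrib)

lemma kronecker_product_uminus_right:
  "kronecker_product (A :: 'a::ring^'n^'m) (- B) = - kronecker_product A B"
  by (simp add: kronecker_product_def vec_eq_iff)

lemma kronecker_product_scaleR_left:
  "kronecker_product (c *\<^sub>R A :: real^'n^'m) B = c *\<^sub>R kronecker_product A B"
  by (simp add: kronecker_product_def vec_eq_iff)

lemma clifford_relations_tensor_generators:
  "clifford_gens G \<phi> \<Longrightarrow> clifford_relations (kronecker_product G (mat 1)) (case_prod \<phi>)"
  by (simp add: clifford_gens_def clifford_relations_def kronecker_product_def mat_def)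

lemma J_hat_eq_clifford_quadratic:
  "J_hat \<alpha> X P \<phi> = clifford_quadratic (case_prod \<phi>) (kronecker_product (X \<alpha>) P)"
  unfolding J_hat_def clifford_quadratic_def kronecker_product_def
  by (simp add: sum_UNIV_prod) (rule sum.cong[OF refl], rule sum.swap)

lemma J_hat_uminus: "J_hat \<alpha> X (- P) \<phi> = - J_hat \<alpha> X P \<phi>"
  by (simp add: J_hat_eq_clifford_quadratic kronecker_product_uminus_right clifford_quadratic_uminus)

lemma G_anticomm_commute: "G_anticomm G P Q = G_anticomm G Q P"
  by (simp add: G_anticomm_def add.commute)

lemma ring_comm_J_hat:
  assumes cl: "clifford_gens G \<phi>" and G_sym: "transpose G = G"
    and X_sym: "transpose (X \<alpha>) = X \<alpha>" and P_anti: "transpose P = - P"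
  shows "ring_comm (J_hat \<alpha> X P \<phi>) (J_hat \<beta> X Q \<phi>)
       = 2 *\<^sub>R clifford_quadratic (case_prod \<phi>)
           (kronecker_product (X \<alpha> ** G ** X \<beta>) (P ** Q) - kronecker_product (X \<beta> ** G ** X \<alpha>) (Q ** P))"
proof -
  have g_sym: "transpose (kronecker_product G (mat 1)) = kronecker_product G (mat 1)"
    by (simp add: transpose_kronecker_product G_sym)
  have M_anti: "transpose (kronecker_product (X \<alpha>) P) = - kronecker_product (X \<alpha>) P"
    by (simp add: transpose_kronecker_product X_sym P_anti kronecker_product_uminus_right)
  show ?thesis
    unfolding J_hat_eq_clifford_quadratic
      ring_comm_clifford_quadratic[OF clifford_relations_tensor_generators[OF cl] g_sym M_anti]
    by (simp add: kronecker_product_mult)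
qed

lemma ring_comm_J_hat_commuting:
  assumes "clifford_gens G \<phi>" "transpose G = G" "transpose (X \<alpha>) = X \<alpha>" "transpose P = - P"
    and "Q ** P = P ** Q" and "G_bracket G (X \<alpha>) (X \<beta>) = 0"
  shows "ring_comm (J_hat \<alpha> X P \<phi>) (J_hat \<beta> X Q \<phi>) = 0"
  using assms
  by (simp add: ring_comm_J_hat G_bracket_def clifford_quadratic_def flip: kronecker_product_diff_left)

lemma ring_comm_J_hat_anticommuting:
  assumes "clifford_gens G \<phi>" "transpose G = G" "transpose (X \<alpha>) = X \<alpha>" "transpose P = - P"
    and QP: "Q ** P = - (P ** Q)" and X_anticomm: "G_anticomm G (X \<alpha>) (X \<beta>) = (1/2) *\<^sub>R X \<gamma>"
  shows "ring_comm (J_hat \<alpha> X P \<phi>) (J_hat \<beta> X Q \<phi>) = J_hat \<gamma> X (P ** Q) \<phi>"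
proof -
  have "ring_comm (J_hat \<alpha> X P \<phi>) (J_hat \<beta> X Q \<phi>)
      = 2 *\<^sub>R clifford_quadratic (case_prod \<phi>)
          (kronecker_product (X \<alpha> ** G ** X \<beta>) (P ** Q) - kronecker_product (X \<beta> ** G ** X \<alpha>) (Q ** P))"
    by (rule ring_comm_J_hat) fact+
  also have "\<dots> = 2 *\<^sub>R clifford_quadratic (case_prod \<phi>)
                      (kronecker_product (G_anticomm G (X \<alpha>) (X \<beta>)) (P ** Q))"
    by (simp add: QP G_anticomm_def kronecker_product_add_left kronecker_product_uminus_right)
  also have "\<dots> = J_hat \<gamma> X (P ** Q) \<phi>"
    by (simp add: X_anticomm J_hat_eq_clifford_quadratic kronecker_product_scaleR_left
        clifford_quadratic_scaleR)
  finally show ?thesis .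
qed

lemma ring_comm_J_hat_twice_anticommuting:
  assumes "clifford_gens G \<phi>" "transpose G = G" "transpose (X \<alpha>) = X \<alpha>" "transpose P = - P"
    and PP: "P ** P = - mat 1" and QP: "Q ** P = - (P ** Q)"
    and "G_anticomm G (X \<alpha>) (X \<beta>) = (1/2) *\<^sub>R X \<gamma>"
    and "G_anticomm G (X \<alpha>) (X \<gamma>) = (1/2) *\<^sub>R X \<beta>"
  shows "ring_comm (J_hat \<alpha> X P \<phi>) (ring_comm (J_hat \<alpha> X P \<phi>) (J_hat \<beta> X Q \<phi>))
       = - J_hat \<beta> X Q \<phi>"
proof -
  have PQP: "(P ** Q) ** P = - (P ** (P ** Q))"
    by (simp add: QP matrix_uminus_right flip: matrix_mul_assoc)
  have "ring_comm (J_hat \<alpha> X P \<phi>) (J_hat \<beta> X Q \<phi>) = J_hat \<gamma> X (P ** Q) \<phi>"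
    by (rule ring_comm_J_hat_anticommuting) fact+
  also have "ring_comm (J_hat \<alpha> X P \<phi>) \<dots> = J_hat \<beta> X (P ** (P ** Q)) \<phi>"
    by (rule ring_comm_J_hat_anticommuting) (fact | rule PQP)+
  finally show ?thesis
    by (simp add: matrix_mul_assoc PP matrix_uminus_left J_hat_uminus)
qed

lemma simple_root_in_lambda_roots: "simple_root i \<in> lambda_roots A"
  by (simp add: lambda_roots_def)

lemma edge_root_in_lambda_roots:
  "i \<noteq> j \<Longrightarrow> A i j = -1 \<Longrightarrow> (\<lambda>m. simple_root i m + simple_root j m) \<in> lambda_roots A"
  unfolding lambda_roots_def by blast

lemma root_form_simple_root: "root_form A (simple_root i) (simple_root j) = A i j"
  unfolding root_form_def simple_root_def mult.assoc sum_distrib_left[symmetric]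
  by (simp add: if_distrib[where f="\<lambda>x. x * _"] cong: if_cong)

lemma root_form_add_left: "root_form A (\<lambda>m. c m + d m) e = root_form A c e + root_form A d e"
  by (simp add: root_form_def algebra_simps sum.distrib)

lemma root_form_edge_root_simple_root:
  assumes "simply_laced_GCM A" and "A i j = -1"
  shows "root_form A (\<lambda>m. simple_root i m + simple_root j m) (simple_root i) = 1"
  using assms unfolding root_form_add_left root_form_simple_root simply_laced_GCM_def by simp

theorem proposition3p5:
  fixes A :: "'n::finite \<Rightarrow> 'n \<Rightarrow> int"
    and G :: "real^'k^'k"
    and X :: "('n \<Rightarrow> int) \<Rightarrow> real^'k^'k"
    and R :: "'n \<Rightarrow> real^'l^'l"
    and \<phi> :: "'k \<Rightarrow> 'l \<Rightarrow> 'c::real_algebra_1"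
  assumes A: "simply_laced_GCM A"
    and G_sym: "transpose G = G"
    and G_nondeg: "invertible G"
    and X_sym: "\<forall>\<alpha>\<in>lambda_roots A. transpose (X \<alpha>) = X \<alpha>"
    and X_comm: "\<forall>\<alpha>\<in>lambda_roots A. \<forall>\<beta>\<in>lambda_roots A.
                   root_form A \<alpha> \<beta> = 0 \<longrightarrow> G_bracket G (X \<alpha>) (X \<beta>) = 0"
    and X_plus: "\<forall>\<alpha>\<in>lambda_roots A. \<forall>\<beta>\<in>lambda_roots A.
                   root_form A \<alpha> \<beta> = -1 \<and> (\<lambda>m. \<alpha> m + \<beta> m) \<in> lambda_roots A \<longrightarrow>
                   G_anticomm G (X \<alpha>) (X \<beta>) = (1/2) *\<^sub>R X ((\<lambda>m. \<alpha> m + \<beta> m))"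
    and X_minus: "\<forall>\<alpha>\<in>lambda_roots A. \<forall>\<beta>\<in>lambda_roots A.
                   root_form A \<alpha> \<beta> = 1 \<and> (\<lambda>m. \<alpha> m - \<beta> m) \<in> lambda_roots A \<longrightarrow>
                   G_anticomm G (X \<alpha>) (X \<beta>) = (1/2) *\<^sub>R X ((\<lambda>m. \<alpha> m - \<beta> m))"
    and R: "gen_spin_rep A R"
    and cliff: "clifford_gens G \<phi>"
  shows "berman_relations A ring_comm
           (\<lambda>i. J_hat (simple_root i) X (2 *\<^sub>R R i) \<phi>)"
  unfolding berman_relations_def
proof (intro allI impI conjI)
  fix i j :: 'n
  assume "i \<noteq> j"
  let ?\<alpha> = simple_root and ?\<Gamma> = "\<lambda>i. 2 *\<^sub>R R i"
  have "transpose (X (?\<alpha> i)) = X (?\<alpha> i)"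
    using X_sym by (simp add: simple_root_in_lambda_roots)
  note J_hat_rules = cliff G_sym this gen_spin_rep_doubled_antisym[OF R]
  show "ring_comm (J_hat (?\<alpha> i) X (?\<Gamma> i) \<phi>) (J_hat (?\<alpha> j) X (?\<Gamma> j) \<phi>) = 0" if "A i j = 0"
    using X_comm \<open>i \<noteq> j\<close> that
    by (intro ring_comm_J_hat_commuting[where X = X and \<alpha> = "?\<alpha> i", OF J_hat_rules]
        gen_spin_rep_doubled_commute[OF R])
      (simp_all add: root_form_simple_root simple_root_in_lambda_roots)
  show "ring_comm (J_hat (?\<alpha> i) X (?\<Gamma> i) \<phi>)
          (ring_comm (J_hat (?\<alpha> i) X (?\<Gamma> i) \<phi>) (J_hat (?\<alpha> j) X (?\<Gamma> j) \<phi>))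
      = - J_hat (?\<alpha> j) X (?\<Gamma> j) \<phi>" if "A i j = -1"
  proof (rule ring_comm_J_hat_twice_anticommuting[where X = X and \<alpha> = "?\<alpha> i", OF J_hat_rules
        gen_spin_rep_doubled_square[OF R] gen_spin_rep_doubled_anticommute[OF R \<open>i \<noteq> j\<close> that]])
    define \<alpha>ij where "\<alpha>ij = (\<lambda>m. ?\<alpha> i m + ?\<alpha> j m)"
    have \<alpha>ij: "\<alpha>ij \<in> lambda_roots A" "root_form A \<alpha>ij (?\<alpha> i) = 1"
      "(\<lambda>m. \<alpha>ij m - ?\<alpha> i m) = ?\<alpha> j"
      using edge_root_in_lambda_roots[of i j A] root_form_edge_root_simple_root[OF A that] \<open>i \<noteq> j\<close> that
      by (simp_all add: \<alpha>ij_def)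
    show "G_anticomm G (X (?\<alpha> i)) (X (?\<alpha> j)) = (1/2) *\<^sub>R X \<alpha>ij"
      using X_plus[rule_format, of "?\<alpha> i" "?\<alpha> j"] \<alpha>ij that
      by (simp add: \<alpha>ij_def root_form_simple_root simple_root_in_lambda_roots)
    show "G_anticomm G (X (?\<alpha> i)) (X \<alpha>ij) = (1/2) *\<^sub>R X (?\<alpha> j)"
      using X_minus[rule_format, of \<alpha>ij "?\<alpha> i"] \<alpha>ij
      by (simp add: simple_root_in_lambda_roots G_anticomm_commute)
  qed
qed

end
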